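(* Let $K\subset\mathbb{R}^d$ be a convex body (not necessarily centrally symmetric) with parameter of asymmetry $\sigma$. Let $\mathcal{K}=\{o_i+\tau_iK : i=1,\dots,n\}$ with $o_i\in\mathbb{R}^d$ and $\tau_1,\dots,\tau_n>0$ be a non-separable family of positive homothetic copies of $K$. Then there is a translate of $\frac{\sigma+1}{2}\left(\sum_{i=1}^n\tau_i\right)K$ that covers $\bigcup\mathcal{K}$.
   Context: A convex body is a compact convex set with nonempty interior. A family $\mathcal{K}$ of convex bodies in $\mathbb{R}^d$ is called non-separable if every hyperplane $H$ that intersects $\operatorname{conv}\bigcup\mathcal{K}$ intersects some member of $\mathcal{K}$. For a convex body $K$, the parameter of asymmetry is $\sigma=\min_{q\in\operatorname{int}K}\min\{\mu>0 : (K-q)\subset-\mu(K-q)\}$. Equivalently, it is $\min_{q\in\operatorname{int}K}\min\{\mu>0:(K-q)^\circ\subset-\mu(K-q)^\circ\}$, where $L^\circ=\{p:\langle p,x\rangle\le1\ \forall x\in L\}$ denotes the polar body. *)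

theory Defs
  imports "HOL-Analysis.Analysis"
begin

definition convex_body :: "'a::euclidean_space set \<Rightarrow> bool" where
  "convex_body K \<longleftrightarrow> compact K \<and> convex K \<and> interior K \<noteq> {}"

definition hyperplane :: "'a::euclidean_space set \<Rightarrow> bool" where
  "hyperplane H \<longleftrightarrow> (\<exists>a b. a \<noteq> 0 \<and> H = {x. a \<bullet> x = b})"

definition non_separable :: "'a::euclidean_space set set \<Rightarrow> bool" where
  "non_separable F \<longleftrightarrow>
     (\<forall>H. hyperplane H \<and> H \<inter> convex hull (\<Union>F) \<noteq> {} \<longrightarrow> (\<exists>C\<in>F. H \<inter> C \<noteq> {}))"

definition asymmetry :: "'a::euclidean_space set \<Rightarrow> real" where
  "asymmetry K = (INF q\<in>interior K.
      Inf {\<mu>::real. \<mu> > 0 \<and> (\<lambda>x. x - q) ` K \<subseteq> (\<lambda>x. - \<mu> *\<^sub>R (x - q)) ` K})"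

end

theory Submission
  imports Defs
begin

text \<open>
  By compactness the infimum defining the asymmetry \<sigma> of K is attained: there is q \<in> K
  such that K contains the reflection of K through q shrunk by the factor 1/\<sigma>.
  Let T = \<Sum>\<tau> i and let C be the homothet of K with ratio (\<sigma> + 1)/2 \<cdot> T whose copy of q is
  the \<tau>-weighted centroid g of the points c i + \<tau> i q. As C is closed and convex, it
  suffices to compare support values in each direction u. Projected onto u, the copy
  c i + \<tau> i K is an interval of length \<tau> i \<cdot> w ending at r i, where w is the width of K in
  direction u, and non-separability means that these intervals leave no gap. Covering the
  gap between r k and max r by the intervals ending above r k gives
  \<Sum>k. \<tau> k (max r - r k) \<le> w \<cdot> \<Sum>{\<tau> k \<tau> j | r k < r j} \<le> w (T^2 - \<Sum>\<tau> i^2) / 2,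
  while the reflection property bounds w by (1 + \<sigma>) times the support distance of K from q
  in direction u. Together these place every r i below the support value of C.
\<close>

lemma non_separable_level_hit:
  fixes u :: "'a::euclidean_space"
  assumes "non_separable F" "p \<in> \<Union>F" "p' \<in> \<Union>F" "u \<bullet> p < b" "b < u \<bullet> p'"
  shows "\<exists>C\<in>F. \<exists>x\<in>C. u \<bullet> x = b"
proof -
  have "\<exists>x \<in> convex hull (\<Union>F). u \<bullet> x = b"
    using assms(4,5) by (intro connected_ivt_hyperplane[of _ p p'] convex_connected
        convex_convex_hull hull_inc assms(2,3)) auto
  moreover have "u \<noteq> 0" using assms(4,5) by auto
  then have "hyperplane {x. u \<bullet> x = b}" unfolding hyperplane_def by blast
  ultimately show ?thesis using assms(1) unfolding non_separable_def by blast
qed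

lemma mem_closed_convex_if_supported:
  fixes p :: "'a::euclidean_space"
  assumes "convex C" "closed C" "\<And>u. \<exists>x\<in>C. u \<bullet> p \<le> u \<bullet> x"
  shows "p \<in> C"
proof (rule ccontr)
  assume "p \<notin> C"
  then obtain a b where "a \<bullet> p < b" "\<forall>x\<in>C. b < a \<bullet> x"
    using separating_hyperplane_closed_point assms(1,2) by blast
  then show False using assms(3)[of "- a"] by fastforce
qed

lemma sum_power2_le_power2_sum:
  fixes f :: "'b \<Rightarrow> real"
  assumes "\<And>i. i \<in> I \<Longrightarrow> 0 \<le> f i"
  shows "(\<Sum>i\<in>I. (f i)\<^sup>2) \<le> (\<Sum>i\<in>I. f i)\<^sup>2"
  using assms
proof (induction I rule: infinite_finite_induct)
  case (insert i I)
  have "0 \<le> 2 * f i * sum f I" using insert.prems by (simp add: sum_nonneg)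
  then show ?case using insert by (simp add: power2_sum)
qed simp_all

lemma interval_length_le_cover_sum:
  fixes x y :: real and l r :: "'b \<Rightarrow> real"
  assumes "finite J" "x \<le> y" "{x<..<y} \<subseteq> (\<Union>j\<in>J. {l j..r j})" "\<And>j. j \<in> J \<Longrightarrow> l j \<le> r j"
  shows "y - x \<le> (\<Sum>j\<in>J. r j - l j)"
proof -
  have "y - x = measure lborel {x<..<y}" using assms(2) by simp
  also have "\<dots> \<le> measure lborel (\<Union>j\<in>J. {l j..r j})"
    by (rule measure_mono_fmeasurable[OF assms(3)])
       (auto intro: fmeasurable.finite_UN assms(1) simp flip: box_real)
  also have "\<dots> \<le> (\<Sum>j\<in>J. measure lborel {l j..r j})"
    by (rule measure_UNION_le[OF assms(1)]) simp
  also have "\<dots> = (\<Sum>j\<in>J. r j - l j)" using assms(4) by simp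
  finally show ?thesis .
qed

lemma sum_ordered_pairs_le:
  fixes r w :: "'b \<Rightarrow> real"
  assumes "finite I" "\<And>i. i \<in> I \<Longrightarrow> 0 \<le> w i"
  shows "2 * (\<Sum>i\<in>I. \<Sum>j\<in>I. if r i < r j then w i * w j else 0)
           \<le> (\<Sum>i\<in>I. w i)\<^sup>2 - (\<Sum>i\<in>I. (w i)\<^sup>2)"
proof -
  let ?pairs = "\<lambda>R. \<Sum>i\<in>I. \<Sum>j\<in>I. if R i j then w i * w j else 0"
  have "(\<Sum>i\<in>I. w i)\<^sup>2 = ?pairs (\<lambda>i j. r i < r j) + ?pairs (\<lambda>i j. r j < r i) + ?pairs (\<lambda>i j. r i = r j)"
    unfolding power2_eq_square sum_product sum.distrib[symmetric]
    by (intro sum.cong refl) auto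
  moreover have "?pairs (\<lambda>i j. r j < r i) = ?pairs (\<lambda>i j. r i < r j)"
    by (subst sum.swap) (intro sum.cong refl, simp add: mult.commute)
  moreover have "(\<Sum>i\<in>I. (w i)\<^sup>2) \<le> ?pairs (\<lambda>i j. r i = r j)"
  proof (rule sum_mono)
    fix i assume "i \<in> I"
    then show "(w i)\<^sup>2 \<le> (\<Sum>j\<in>I. if r i = r j then w i * w j else 0)"
      using member_le_sum[of i I "\<lambda>j. if r i = r j then w i * w j else 0"] assms
      by (auto simp: power2_eq_square)
  qed
  ultimately show ?thesis by linarith
qed

lemma weighted_spread_le_of_interval_cover:
  fixes r \<tau> :: "'b \<Rightarrow> real"
  assumes I: "finite I" "i \<in> I" and \<tau>: "\<And>j. j \<in> I \<Longrightarrow> 0 \<le> \<tau> j" and w: "0 \<le> w"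
    and cover: "\<And>k b. k \<in> I \<Longrightarrow> r k < b \<Longrightarrow> b < Max (r ` I) \<Longrightarrow>
                  \<exists>j\<in>I. r j - \<tau> j * w \<le> b \<and> b \<le> r j"
  shows "(\<Sum>j\<in>I. \<tau> j) * r i - (\<Sum>j\<in>I. \<tau> j * r j)
           \<le> w / 2 * ((\<Sum>j\<in>I. \<tau> j)\<^sup>2 - (\<Sum>j\<in>I. (\<tau> j)\<^sup>2))"
proof -
  define R where "R = Max (r ` I)"
  have r_le_R: "r k \<le> R" if "k \<in> I" for k
    unfolding R_def using I(1) that by simp
  have gap: "R - r k \<le> w * (\<Sum>j\<in>I. if r k < r j then \<tau> j else 0)" if k: "k \<in> I" for k
  proof -
    have "R - r k \<le> (\<Sum>j\<in>{j\<in>I. r k < r j}. r j - (r j - \<tau> j * w))"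
    proof (rule interval_length_le_cover_sum)
      show "{r k<..<R} \<subseteq> (\<Union>j\<in>{j\<in>I. r k < r j}. {r j - \<tau> j * w..r j})"
        using cover[OF k] unfolding R_def by fastforce
    qed (use I r_le_R k \<tau> w in auto)
    also have "\<dots> = w * (\<Sum>j\<in>I. if r k < r j then \<tau> j else 0)"
      using I(1) by (simp add: sum.inter_filter sum_distrib_left if_distrib mult.commute cong: if_cong)
    finally show ?thesis .
  qed
  have "(\<Sum>j\<in>I. \<tau> j) * r i - (\<Sum>j\<in>I. \<tau> j * r j) = (\<Sum>j\<in>I. \<tau> j * (r i - r j))"
    by (simp add: sum_distrib_right sum_subtractf right_diff_distrib)
  also have "\<dots> \<le> (\<Sum>k\<in>I. \<tau> k * (R - r k))"
    by (intro sum_mono mult_left_mono) (use \<tau> r_le_R I(2) in auto)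
  also have "\<dots> \<le> (\<Sum>k\<in>I. \<tau> k * (w * (\<Sum>j\<in>I. if r k < r j then \<tau> j else 0)))"
    by (intro sum_mono mult_left_mono gap \<tau>)
  also have "\<dots> = w * (\<Sum>k\<in>I. \<Sum>j\<in>I. if r k < r j then \<tau> k * \<tau> j else 0)"
    by (simp add: sum_distrib_left if_distrib mult_ac cong: if_cong)
  also have "\<dots> \<le> w / 2 * ((\<Sum>j\<in>I. \<tau> j)\<^sup>2 - (\<Sum>j\<in>I. (\<tau> j)\<^sup>2))"
    using \<tau> mult_left_mono[OF sum_ordered_pairs_le[OF I(1), where w = \<tau> and r = r] w] by simp
  finally show ?thesis .
qed

lemma centroid_shift_bound:
  fixes T Q S a w \<sigma> \<rho> :: real
  assumes "0 < T" "0 \<le> Q" "Q \<le> T\<^sup>2" "0 \<le> a" "1 \<le> \<sigma>" "w \<le> (1 + \<sigma>) * a"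
    and "T * \<rho> - S \<le> w / 2 * (T\<^sup>2 - Q)"
  shows "\<rho> \<le> (S - a * Q) / T + (\<sigma> + 1) / 2 * T * a"
proof -
  have "w / 2 * (T\<^sup>2 - Q) \<le> (1 + \<sigma>) * a / 2 * (T\<^sup>2 - Q)"
    using assms(3,6) by (intro mult_right_mono) auto
  moreover have "2 * a \<le> (1 + \<sigma>) * a" using assms(4,5) by (intro mult_right_mono) auto
  then have "a * Q \<le> (1 + \<sigma>) / 2 * a * Q" using assms(2) by (intro mult_right_mono) auto
  moreover have "(1 + \<sigma>) * a / 2 * (T\<^sup>2 - Q) = (\<sigma> + 1) / 2 * T * a * T - (1 + \<sigma>) / 2 * a * Q"
    by (simp add: field_simps power2_eq_square)
  ultimately have "T * \<rho> \<le> S - a * Q + (\<sigma> + 1) / 2 * T * a * T"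
    using assms(7) by linarith
  then have "\<rho> \<le> (S - a * Q + (\<sigma> + 1) / 2 * T * a * T) / T"
    using assms(1) by (simp add: pos_le_divide_eq mult.commute)
  also have "\<dots> = (S - a * Q) / T + (\<sigma> + 1) / 2 * T * a"
    using assms(1) by (simp add: add_divide_distrib)
  finally show ?thesis .
qed

definition reflection_ratios :: "'a::real_vector set \<Rightarrow> 'a \<Rightarrow> real set" where
  "reflection_ratios K q = {\<mu>. 0 < \<mu> \<and> (\<forall>x\<in>K. q - (x - q) /\<^sub>R \<mu> \<in> K)}"

lemma asymmetry_eq_INF_reflection_ratios:
  "asymmetry K = (INF q\<in>interior K. Inf (reflection_ratios K q))"
proof -
  have "(\<lambda>x. x - q) ` K \<subseteq> (\<lambda>x. - \<mu> *\<^sub>R (x - q)) ` K \<longleftrightarrow> (\<forall>x\<in>K. q - (x - q) /\<^sub>R \<mu> \<in> K)"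
    if "0 < \<mu>" for q and \<mu> :: real
  proof -
    have "x - q = - \<mu> *\<^sub>R (z - q) \<longleftrightarrow> z = q - (x - q) /\<^sub>R \<mu>" for x z
      using that by auto
    then show ?thesis by (auto simp: image_def)
  qed
  then show ?thesis
    unfolding asymmetry_def reflection_ratios_def by (intro INF_cong refl arg_cong[where f = Inf]) blast
qed

lemma reflection_ratios_nonempty:
  fixes K :: "'a::real_normed_vector set"
  assumes "bounded K" "q \<in> interior K"
  shows "reflection_ratios K q \<noteq> {}"
proof -
  obtain e where e: "0 < e" "ball q e \<subseteq> K" using assms(2) by (auto simp: mem_interior)
  obtain D where D: "\<And>x. x \<in> K \<Longrightarrow> dist q x \<le> D"
    using assms(1) bounded_any_center[of K q] by auto
  define \<mu> where "\<mu> = D / e + 1"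
  have "\<mu> \<in> reflection_ratios K q"
  proof -
    have "q \<in> K" using e centre_in_ball by (meson subsetD)
    then have "0 \<le> D" using D zero_le_dist[of q q] by fastforce
    then have \<mu>: "0 < \<mu>" "D < e * \<mu>"
      unfolding \<mu>_def using e(1) by (auto simp: distrib_left intro: add_nonneg_pos)
    have "q - (x - q) /\<^sub>R \<mu> \<in> ball q e" if "x \<in> K" for x
    proof -
      have "norm (x - q) / \<mu> \<le> D / \<mu>"
        using D[OF that] \<mu>(1) by (simp add: dist_norm norm_minus_commute divide_right_mono)
      also have "\<dots> < e" using \<mu> by (simp add: pos_divide_less_eq mult.commute)
      finally show ?thesis using \<mu>(1) by (simp add: dist_norm divide_inverse_commute)
    qed
    then show ?thesis using e(2) \<mu>(1) unfolding reflection_ratios_def by blast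
  qed
  then show ?thesis by blast
qed

lemma one_le_reflection_ratio:
  fixes K :: "'a::euclidean_space set"
  assumes "compact K" "q \<in> interior K" "\<mu> \<in> reflection_ratios K q"
  shows "1 \<le> \<mu>"
proof -
  have \<mu>: "0 < \<mu>" and refl: "\<And>x. x \<in> K \<Longrightarrow> q - (x - q) /\<^sub>R \<mu> \<in> K"
    using assms(3) unfolding reflection_ratios_def by auto
  obtain e where e: "0 < e" "ball q e \<subseteq> K" using assms(2) by (auto simp: mem_interior)
  have "q \<in> K" using assms(2) interior_subset by blast
  obtain u :: 'a where u: "u \<in> Basis" using nonempty_Basis by blast
  have "continuous_on K (inner u)" by (intro continuous_intros)
  then obtain y where y: "y \<in> K" "\<And>x. x \<in> K \<Longrightarrow> u \<bullet> x \<le> u \<bullet> y"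
    using continuous_attains_sup[OF assms(1)] \<open>q \<in> K\<close> by blast
  define a where "a = u \<bullet> (y - q)"
  have "q + (e / 2) *\<^sub>R u \<in> K" using e u by (intro subsetD[OF e(2)]) (auto simp: dist_norm)
  then have "u \<bullet> (q + (e / 2) *\<^sub>R u) \<le> u \<bullet> y" by (rule y(2))
  then have a: "0 < a" using e(1) u by (simp add: a_def inner_add_right inner_diff_right)
  \<comment> \<open>reflecting twice through q scales distances from q by 1 / (\<mu> * \<mu>)\<close>
  have "(q - (y - q) /\<^sub>R \<mu>) - q = - ((y - q) /\<^sub>R \<mu>)" by simp
  then have "q + (y - q) /\<^sub>R (\<mu> * \<mu>) \<in> K"
    using refl[OF refl[OF y(1)]] by simp
  then have "u \<bullet> (q + (y - q) /\<^sub>R (\<mu> * \<mu>)) \<le> u \<bullet> y" by (rule y(2))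
  then have "a / (\<mu> * \<mu>) \<le> a"
    by (simp add: a_def inner_add_right inner_diff_right divide_inverse_commute)
  then have "1 \<le> \<mu> * \<mu>" using a \<mu> by (simp add: divide_le_eq)
  show ?thesis
  proof (rule ccontr)
    assume "\<not> 1 \<le> \<mu>"
    then have "\<mu> * \<mu> < 1 * 1" using \<mu> by (intro mult_strict_mono) auto
    with \<open>1 \<le> \<mu> * \<mu>\<close> show False by simp
  qed
qed

lemma reflection_ratios_limit:
  fixes K :: "'a::real_normed_vector set"
  assumes "closed K" "qs \<longlonglongrightarrow> q" "\<mu>s \<longlonglongrightarrow> \<sigma>" "\<sigma> \<noteq> 0"
    and "\<And>k. \<mu>s k \<in> reflection_ratios K (qs k)" "x \<in> K"
  shows "q - (x - q) /\<^sub>R \<sigma> \<in> K"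
proof (rule closed_sequentially[OF assms(1)])
  show "qs k - (x - qs k) /\<^sub>R \<mu>s k \<in> K" for k
    using assms(5,6) unfolding reflection_ratios_def by blast
  show "(\<lambda>k. qs k - (x - qs k) /\<^sub>R \<mu>s k) \<longlonglongrightarrow> q - (x - q) /\<^sub>R \<sigma>"
    by (intro tendsto_intros assms(2-4))
qed

lemma asymmetry_approximation:
  fixes K :: "'a::euclidean_space set"
  assumes "compact K" "interior K \<noteq> {}"
  obtains qs \<mu>s where "\<And>k. qs k \<in> interior K" "\<And>k. \<mu>s k \<in> reflection_ratios K (qs k)"
    "\<mu>s \<longlonglongrightarrow> asymmetry K"
proof -
  define \<sigma> where "\<sigma> = asymmetry K"
  define R where "R = reflection_ratios K"
  have R_ne: "R q \<noteq> {}" if "q \<in> interior K" for q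
    unfolding R_def by (rule reflection_ratios_nonempty[OF compact_imp_bounded[OF assms(1)] that])
  have R_bdd: "bdd_below (R q)" for q
    unfolding R_def reflection_ratios_def by (rule bdd_belowI[of _ 0]) auto
  have "0 \<le> Inf (R q)" if "q \<in> interior K" for q
    by (rule cInf_greatest[OF R_ne[OF that]]) (simp add: R_def reflection_ratios_def)
  then have bdd: "bdd_below ((\<lambda>q. Inf (R q)) ` interior K)" by (rule bdd_belowI2)
  have \<sigma>: "\<sigma> = Inf ((\<lambda>q. Inf (R q)) ` interior K)"
    unfolding \<sigma>_def R_def by (rule asymmetry_eq_INF_reflection_ratios)
  have "\<exists>q \<mu>. q \<in> interior K \<and> \<mu> \<in> R q \<and> \<sigma> \<le> \<mu> \<and> \<mu> < \<sigma> + 1 / real (Suc k)" for k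
  proof -
    have "Inf ((\<lambda>q. Inf (R q)) ` interior K) < \<sigma> + 1 / real (Suc k)" unfolding \<sigma>[symmetric] by simp
    then obtain q where q: "q \<in> interior K" "Inf (R q) < \<sigma> + 1 / real (Suc k)"
      using cInf_lessD[of "(\<lambda>q. Inf (R q)) ` interior K"] assms(2) by blast
    then obtain \<mu> where \<mu>: "\<mu> \<in> R q" "\<mu> < \<sigma> + 1 / real (Suc k)"
      using cInf_lessD[OF R_ne[OF q(1)]] by blast
    have "\<sigma> \<le> Inf (R q)" unfolding \<sigma> by (rule cINF_lower[OF bdd q(1)])
    also have "\<dots> \<le> \<mu>" by (rule cInf_lower[OF \<mu>(1) R_bdd])
    finally show ?thesis using q(1) \<mu> by blast
  qed
  then have "\<exists>qs. \<forall>k. \<exists>\<mu>. qs k \<in> interior K \<and> \<mu> \<in> R (qs k) \<and> \<sigma> \<le> \<mu> \<and> \<mu> < \<sigma> + 1 / real (Suc k)"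
    by (intro choice allI)
  then obtain qs where "\<forall>k. \<exists>\<mu>. qs k \<in> interior K \<and> \<mu> \<in> R (qs k) \<and> \<sigma> \<le> \<mu> \<and> \<mu> < \<sigma> + 1 / real (Suc k)"
    by blast
  then have "\<exists>\<mu>s. \<forall>k. qs k \<in> interior K \<and> \<mu>s k \<in> R (qs k) \<and> \<sigma> \<le> \<mu>s k \<and> \<mu>s k < \<sigma> + 1 / real (Suc k)"
    by (rule choice)
  then obtain \<mu>s where seq: "\<And>k. qs k \<in> interior K" "\<And>k. \<mu>s k \<in> R (qs k)"
    "\<And>k. \<sigma> \<le> \<mu>s k" "\<And>k. \<mu>s k < \<sigma> + 1 / real (Suc k)"
    by blast
  have "\<mu>s \<longlonglongrightarrow> \<sigma>"
  proof (rule tendsto_sandwich[of "\<lambda>_. \<sigma>" _ _ "\<lambda>k. \<sigma> + 1 / real (Suc k)"])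
    show "\<forall>\<^sub>F k in sequentially. \<sigma> \<le> \<mu>s k" using seq(3) by (intro always_eventually allI)
    show "\<forall>\<^sub>F k in sequentially. \<mu>s k \<le> \<sigma> + 1 / real (Suc k)"
      using seq(4) by (intro always_eventually allI less_imp_le)
    show "(\<lambda>k. \<sigma> + 1 / real (Suc k)) \<longlonglongrightarrow> \<sigma>"
      using tendsto_add[OF tendsto_const LIMSEQ_Suc[OF lim_inverse_n'], of \<sigma>] by simp
  qed simp
  then show ?thesis using that seq(1,2) unfolding \<sigma>_def R_def by blast
qed

lemma asymmetry_attained:
  fixes K :: "'a::euclidean_space set"
  assumes "compact K" "interior K \<noteq> {}"
  shows "\<exists>q\<in>K. 1 \<le> asymmetry K \<and> (\<forall>x\<in>K. q - (x - q) /\<^sub>R asymmetry K \<in> K)"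
proof -
  obtain qs \<mu>s where seq: "\<And>k. qs k \<in> interior K" "\<And>k. \<mu>s k \<in> reflection_ratios K (qs k)"
    and \<mu>s_lim: "\<mu>s \<longlonglongrightarrow> asymmetry K"
    using asymmetry_approximation[OF assms] by blast
  have \<sigma>_ge1: "1 \<le> asymmetry K"
    by (rule LIMSEQ_le_const[OF \<mu>s_lim]) (use one_le_reflection_ratio[OF assms(1) seq(1,2)] in blast)
  have "qs k \<in> K" for k using seq(1) interior_subset by blast
  then obtain q r where q: "q \<in> K" and r: "strict_mono r" and q_lim: "(qs \<circ> r) \<longlonglongrightarrow> q"
    using seq_compactE[OF compact_imp_seq_compact[OF assms(1)], of qs] by blast
  have "q - (x - q) /\<^sub>R asymmetry K \<in> K" if "x \<in> K" for x
  proof (rule reflection_ratios_limit[OF compact_imp_closed[OF assms(1)] q_lim])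
    show "(\<mu>s \<circ> r) \<longlonglongrightarrow> asymmetry K" by (rule LIMSEQ_subseq_LIMSEQ[OF \<mu>s_lim r])
  qed (use \<sigma>_ge1 seq(2) that in auto)
  then show ?thesis using q \<sigma>_ge1 by blast
qed

lemma reflection_width_le:
  fixes u :: "'a::real_inner"
  assumes "0 < \<sigma>" "\<And>x. x \<in> K \<Longrightarrow> q - (x - q) /\<^sub>R \<sigma> \<in> K"
    and "ymin \<in> K" "\<And>y. y \<in> K \<Longrightarrow> u \<bullet> y \<le> u \<bullet> ymax"
  shows "u \<bullet> (ymax - ymin) \<le> (1 + \<sigma>) * (u \<bullet> (ymax - q))"
proof -
  define d where "d = u \<bullet> (q - ymin)"
  have "u \<bullet> (q - (ymin - q) /\<^sub>R \<sigma>) = u \<bullet> q + d / \<sigma>"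
    by (simp add: d_def inner_diff_right divide_inverse_commute right_diff_distrib)
  moreover have "u \<bullet> (q - (ymin - q) /\<^sub>R \<sigma>) \<le> u \<bullet> ymax" by (rule assms(4)[OF assms(2)[OF assms(3)]])
  ultimately have "d / \<sigma> \<le> u \<bullet> (ymax - q)" by (simp add: inner_diff_right)
  then have "d \<le> \<sigma> * (u \<bullet> (ymax - q))" using assms(1) by (simp add: divide_le_eq mult.commute)
  then show ?thesis by (simp add: d_def inner_diff_right algebra_simps)
qed

lemma non_separable_homothets_projection_cover:
  fixes K :: "'a::euclidean_space set" and u :: 'a
  assumes ns: "non_separable {(\<lambda>x. c i + \<tau> i *\<^sub>R x) ` K | i. i \<in> I}"
    and I: "finite I" and \<tau>: "\<And>i. i \<in> I \<Longrightarrow> 0 \<le> \<tau> i"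
    and ymin: "ymin \<in> K" "\<And>y. y \<in> K \<Longrightarrow> u \<bullet> ymin \<le> u \<bullet> y"
    and ymax: "ymax \<in> K" "\<And>y. y \<in> K \<Longrightarrow> u \<bullet> y \<le> u \<bullet> ymax"
    and k: "k \<in> I" and b: "u \<bullet> (c k + \<tau> k *\<^sub>R ymax) < b" "b < (MAX j\<in>I. u \<bullet> (c j + \<tau> j *\<^sub>R ymax))"
  shows "\<exists>j\<in>I. u \<bullet> (c j + \<tau> j *\<^sub>R ymax) - \<tau> j * (u \<bullet> (ymax - ymin)) \<le> b
           \<and> b \<le> u \<bullet> (c j + \<tau> j *\<^sub>R ymax)"
proof -
  have "(MAX j\<in>I. u \<bullet> (c j + \<tau> j *\<^sub>R ymax)) \<in> (\<lambda>j. u \<bullet> (c j + \<tau> j *\<^sub>R ymax)) ` I"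
    using I k by (intro Max_in) auto
  then obtain m where "m \<in> I" "b < u \<bullet> (c m + \<tau> m *\<^sub>R ymax)" using b(2) by auto
  then obtain j y where j: "j \<in> I" "y \<in> K" "u \<bullet> (c j + \<tau> j *\<^sub>R y) = b"
    using non_separable_level_hit[OF ns _ _ b(1)] ymax(1) k by blast
  have "\<tau> j * (u \<bullet> ymin) \<le> \<tau> j * (u \<bullet> y)" "\<tau> j * (u \<bullet> y) \<le> \<tau> j * (u \<bullet> ymax)"
    using ymin(2)[OF j(2)] ymax(2)[OF j(2)] \<tau>[OF j(1)] by (auto intro: mult_left_mono)
  then show ?thesis
    using j by (auto simp: inner_add_right inner_diff_right right_diff_distrib intro!: bexI[of _ j])
qed

lemma non_separable_homothets_support_bound:
  fixes K :: "'a::euclidean_space set" and c :: "'b \<Rightarrow> 'a" and u :: 'a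
  assumes q: "q \<in> K"
    and \<sigma>: "1 \<le> \<sigma>" "\<And>x. x \<in> K \<Longrightarrow> q - (x - q) /\<^sub>R \<sigma> \<in> K"
    and I: "finite I" "i \<in> I" and \<tau>: "\<And>j. j \<in> I \<Longrightarrow> 0 < \<tau> j"
    and ns: "non_separable {(\<lambda>x. c j + \<tau> j *\<^sub>R x) ` K | j. j \<in> I}"
    and ymin: "ymin \<in> K" "\<And>y. y \<in> K \<Longrightarrow> u \<bullet> ymin \<le> u \<bullet> y"
    and ymax: "ymax \<in> K" "\<And>y. y \<in> K \<Longrightarrow> u \<bullet> y \<le> u \<bullet> ymax"
    and y: "y \<in> K"
  defines "T \<equiv> \<Sum>j\<in>I. \<tau> j"
    and "g \<equiv> (\<Sum>j\<in>I. \<tau> j *\<^sub>R (c j + \<tau> j *\<^sub>R q)) /\<^sub>R (\<Sum>j\<in>I. \<tau> j)"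
  shows "u \<bullet> (c i + \<tau> i *\<^sub>R y) \<le> u \<bullet> (g + ((\<sigma> + 1) / 2 * T) *\<^sub>R (ymax - q))"
proof -
  define a where "a = u \<bullet> (ymax - q)"
  define w where "w = u \<bullet> (ymax - ymin)"
  define r where "r j = u \<bullet> (c j + \<tau> j *\<^sub>R ymax)" for j
  define Q where "Q = (\<Sum>j\<in>I. (\<tau> j)\<^sup>2)"
  have \<tau>0: "\<And>j. j \<in> I \<Longrightarrow> 0 \<le> \<tau> j" using \<tau> less_imp_le by blast
  have spread: "T * r i - (\<Sum>j\<in>I. \<tau> j * r j) \<le> w / 2 * (T\<^sup>2 - Q)"
    unfolding T_def Q_def
  proof (rule weighted_spread_le_of_interval_cover[where r = r and \<tau> = \<tau> and w = w, OF I])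
    show "0 \<le> w" using ymax(2)[OF ymin(1)] by (simp add: w_def inner_diff_right)
    show "\<exists>j\<in>I. r j - \<tau> j * w \<le> b \<and> b \<le> r j" if "k \<in> I" "r k < b" "b < Max (r ` I)" for k b
      unfolding r_def w_def
      by (rule non_separable_homothets_projection_cover[OF ns I(1) _ ymin ymax that[unfolded r_def]])
         (use \<tau>0 in blast)
  qed (use \<tau>0 in blast)
  have "\<tau> j * r j = \<tau> j * (u \<bullet> (c j + \<tau> j *\<^sub>R q)) + a * (\<tau> j)\<^sup>2" for j
    by (simp add: r_def a_def inner_add_right inner_diff_right algebra_simps power2_eq_square)
  then have "(\<Sum>j\<in>I. \<tau> j * (u \<bullet> (c j + \<tau> j *\<^sub>R q))) = (\<Sum>j\<in>I. \<tau> j * r j) - a * Q"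
    by (simp add: Q_def sum.distrib sum_distrib_left)
  then have centroid: "u \<bullet> g = ((\<Sum>j\<in>I. \<tau> j * r j) - a * Q) / T"
    by (simp add: g_def T_def inner_sum_right divide_inverse_commute)
  have "u \<bullet> (c i + \<tau> i *\<^sub>R y) \<le> r i"
    using ymax(2)[OF y] \<tau>[OF I(2)] by (simp add: r_def inner_add_right)
  also have "\<dots> \<le> ((\<Sum>j\<in>I. \<tau> j * r j) - a * Q) / T + (\<sigma> + 1) / 2 * T * a"
  proof (rule centroid_shift_bound[OF _ _ _ _ \<sigma>(1) _ spread])
    show "0 < T" unfolding T_def using I \<tau> by (intro sum_pos) auto
    show "0 \<le> Q" unfolding Q_def by (intro sum_nonneg) simp
    show "Q \<le> T\<^sup>2" unfolding Q_def T_def by (rule sum_power2_le_power2_sum[OF \<tau>0])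
    show "0 \<le> a" using ymax(2)[OF q] by (simp add: a_def inner_diff_right)
    show "w \<le> (1 + \<sigma>) * a"
      unfolding w_def a_def using \<sigma>(1) by (intro reflection_width_le[OF _ \<sigma>(2) ymin(1) ymax(2)]) auto
  qed
  also have "\<dots> = u \<bullet> (g + ((\<sigma> + 1) / 2 * T) *\<^sub>R (ymax - q))"
    by (simp add: centroid a_def inner_add_right)
  finally show ?thesis .
qed

lemma non_separable_homothets_covered:
  fixes K :: "'a::euclidean_space set" and c :: "'b \<Rightarrow> 'a"
  assumes K: "compact K" "convex K" "q \<in> K"
    and \<sigma>: "1 \<le> \<sigma>" "\<And>x. x \<in> K \<Longrightarrow> q - (x - q) /\<^sub>R \<sigma> \<in> K"
    and I: "finite I" and \<tau>: "\<And>i. i \<in> I \<Longrightarrow> 0 < \<tau> i"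
    and ns: "non_separable {(\<lambda>x. c i + \<tau> i *\<^sub>R x) ` K | i. i \<in> I}"
  defines "T \<equiv> \<Sum>j\<in>I. \<tau> j"
    and "g \<equiv> (\<Sum>j\<in>I. \<tau> j *\<^sub>R (c j + \<tau> j *\<^sub>R q)) /\<^sub>R (\<Sum>j\<in>I. \<tau> j)"
  shows "(\<Union>i\<in>I. (\<lambda>x. c i + \<tau> i *\<^sub>R x) ` K) \<subseteq> (\<lambda>x. g + ((\<sigma> + 1) / 2 * T) *\<^sub>R (x - q)) ` K"
proof
  define L where "L = (\<sigma> + 1) / 2 * T"
  have C_eq: "(\<lambda>x. g + L *\<^sub>R (x - q)) = (\<lambda>x. (g - L *\<^sub>R q) + L *\<^sub>R x)"
    by (simp add: fun_eq_iff algebra_simps)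
  fix p assume "p \<in> (\<Union>i\<in>I. (\<lambda>x. c i + \<tau> i *\<^sub>R x) ` K)"
  then obtain i y where i: "i \<in> I" and y: "y \<in> K" and p: "p = c i + \<tau> i *\<^sub>R y" by blast
  show "p \<in> (\<lambda>x. g + ((\<sigma> + 1) / 2 * T) *\<^sub>R (x - q)) ` K"
    unfolding L_def[symmetric]
  proof (rule mem_closed_convex_if_supported)
    show "convex ((\<lambda>x. g + L *\<^sub>R (x - q)) ` K)"
      unfolding C_eq by (rule convex_affinity[OF K(2)])
    show "closed ((\<lambda>x. g + L *\<^sub>R (x - q)) ` K)"
      unfolding C_eq by (rule compact_imp_closed[OF compact_affinity[OF K(1)]])
    fix u :: 'a
    have cont: "continuous_on K (inner u)" by (intro continuous_intros)
    have "K \<noteq> {}" using K(3) by blast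
    obtain ymax where ymax: "ymax \<in> K" "\<And>y. y \<in> K \<Longrightarrow> u \<bullet> y \<le> u \<bullet> ymax"
      using continuous_attains_sup[OF K(1) \<open>K \<noteq> {}\<close> cont] by blast
    obtain ymin where ymin: "ymin \<in> K" "\<And>y. y \<in> K \<Longrightarrow> u \<bullet> ymin \<le> u \<bullet> y"
      using continuous_attains_inf[OF K(1) \<open>K \<noteq> {}\<close> cont] by blast
    have "u \<bullet> p \<le> u \<bullet> (g + L *\<^sub>R (ymax - q))"
      unfolding p L_def T_def g_def
      by (rule non_separable_homothets_support_bound[OF K(3) \<sigma> I i \<tau> ns ymin ymax y])
    then show "\<exists>x\<in>(\<lambda>x. g + L *\<^sub>R (x - q)) ` K. u \<bullet> p \<le> u \<bullet> x" using ymax(1) by blast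
  qed
qed

theorem theorem4:
  fixes K :: "'a::euclidean_space set" and n :: nat
    and c :: "nat \<Rightarrow> 'a" and \<tau> :: "nat \<Rightarrow> real"
  assumes "convex_body K"
    and "\<And>i. i \<in> {1..n} \<Longrightarrow> \<tau> i > 0"
    and "non_separable {(\<lambda>x. c i + \<tau> i *\<^sub>R x) ` K | i. i \<in> {1..n}}"
  shows "\<exists>t. (\<Union>i\<in>{1..n}. (\<lambda>x. c i + \<tau> i *\<^sub>R x) ` K)
             \<subseteq> (\<lambda>x. t + ((asymmetry K + 1) / 2 * (\<Sum>i=1..n. \<tau> i)) *\<^sub>R x) ` K"
proof -
  have K: "compact K" "convex K" "interior K \<noteq> {}"
    using assms(1) unfolding convex_body_def by auto
  obtain q where q: "q \<in> K" "1 \<le> asymmetry K" "\<And>x. x \<in> K \<Longrightarrow> q - (x - q) /\<^sub>R asymmetry K \<in> K"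
    using asymmetry_attained[OF K(1,3)] by blast
  define L where "L = (asymmetry K + 1) / 2 * (\<Sum>i=1..n. \<tau> i)"
  define g where "g = (\<Sum>j=1..n. \<tau> j *\<^sub>R (c j + \<tau> j *\<^sub>R q)) /\<^sub>R (\<Sum>j=1..n. \<tau> j)"
  have "(\<Union>i\<in>{1..n}. (\<lambda>x. c i + \<tau> i *\<^sub>R x) ` K) \<subseteq> (\<lambda>x. g + L *\<^sub>R (x - q)) ` K"
    unfolding L_def g_def
    by (rule non_separable_homothets_covered[OF K(1,2) q finite_atLeastAtMost assms(2,3)])
  also have "(\<lambda>x. g + L *\<^sub>R (x - q)) ` K = (\<lambda>x. (g - L *\<^sub>R q) + L *\<^sub>R x) ` K"
    by (simp add: algebra_simps)
  finally show ?thesis unfolding L_def by blast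
qed

end
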